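(* Let $\Sigma$ be a finite set, $I\subseteq\Sigma\times\Sigma$ a symmetric irreflexive relation, and $M=M(\Sigma,I)$ the free partially commutative monoid. Let $\Sigma_0\subseteq\Sigma$, $I_0=(\Sigma_0\times\Sigma_0)\cap I$ and $M_0=M(\Sigma_0,I_0)$, regarded as a submonoid of $M$ via the canonical map. Then the monoid ring $\mathbb{Z}M$ is a free left $\mathbb{Z}M_0$-module.
   Context: For a finite alphabet $\Sigma$ and a symmetric irreflexive relation $I\subseteq \Sigma\times\Sigma$ (the commutation relation), the free partially commutative monoid $M(\Sigma,I)$ is the monoid with presentation $\langle \Sigma \mid ab=ba \text{ for all } (a,b)\in I\rangle$. The canonical map $M(\Sigma_0,I_0)\to M(\Sigma,I)$ sends the class of a word over $\Sigma_0$ to its class in $M(\Sigma,I)$; $\mathbb{Z}M_0$ acts on $\mathbb{Z}M$ by left multiplication. *)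

theory Defs
  imports Main
begin

definition swap_step :: "('a \<times> 'a) set \<Rightarrow> 'a list \<Rightarrow> 'a list \<Rightarrow> bool" where
  "swap_step I u v \<longleftrightarrow> (\<exists>x y a b. (a, b) \<in> I \<and> u = x @ [a, b] @ y \<and> v = x @ [b, a] @ y)"

definition trace_eq :: "('a \<times> 'a) set \<Rightarrow> 'a list \<Rightarrow> 'a list \<Rightarrow> bool" where
  "trace_eq I = (swap_step I)\<^sup>*\<^sup>*"

definition tclass :: "('a \<times> 'a) set \<Rightarrow> 'a list \<Rightarrow> 'a list set" where
  "tclass I w = {v. trace_eq I w v}"

(* the carrier of the free partially commutative monoid M(Sigma, I) *)
definition pcm :: "'a set \<Rightarrow> ('a \<times> 'a) set \<Rightarrow> 'a list set set" where
  "pcm \<Sigma> I = tclass I ` lists \<Sigma>"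

definition rep :: "'a list set \<Rightarrow> 'a list" where
  "rep m = (SOME w. w \<in> m)"

definition pcm_mult :: "('a \<times> 'a) set \<Rightarrow> 'a list set \<Rightarrow> 'a list set \<Rightarrow> 'a list set" where
  "pcm_mult I m1 m2 = tclass I (rep m1 @ rep m2)"

(* the monoid ring Z M(Sigma, I): finitely supported integer functions on M *)
definition mring :: "'a set \<Rightarrow> ('a \<times> 'a) set \<Rightarrow> ('a list set \<Rightarrow> int) set" where
  "mring \<Sigma> I = {f. finite {m. f m \<noteq> 0} \<and> {m. f m \<noteq> 0} \<subseteq> pcm \<Sigma> I}"

definition mr_mult :: "('a \<times> 'a) set \<Rightarrow> ('a list set \<Rightarrow> int) \<Rightarrow> ('a list set \<Rightarrow> int) \<Rightarrow> ('a list set \<Rightarrow> int)" where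
  "mr_mult I f g = (\<lambda>m. \<Sum>(m1, m2) \<in> {(m1, m2). f m1 \<noteq> 0 \<and> g m2 \<noteq> 0 \<and> pcm_mult I m1 m2 = m}.
                          f m1 * g m2)"

(* ring map Z M(Sigma0, I0) -> Z M(Sigma, I) induced by the canonical map [w]_{I0} |-> [w]_I *)
definition mr_map :: "('a \<times> 'a) set \<Rightarrow> ('a list set \<Rightarrow> int) \<Rightarrow> ('a list set \<Rightarrow> int)" where
  "mr_map I r = (\<lambda>m. \<Sum>m0 \<in> {m0. r m0 \<noteq> 0 \<and> tclass I (rep m0) = m}. r m0)"

definition sub_act :: "('a \<times> 'a) set \<Rightarrow> ('a list set \<Rightarrow> int) \<Rightarrow> ('a list set \<Rightarrow> int) \<Rightarrow> ('a list set \<Rightarrow> int)" where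
  "sub_act I r x = mr_mult I (mr_map I r) x"

definition free_left_module ::
  "('r \<Rightarrow> 'b::comm_monoid_add) set \<Rightarrow> ('c \<Rightarrow> 'd::comm_monoid_add) set
     \<Rightarrow> (('r \<Rightarrow> 'b) \<Rightarrow> ('c \<Rightarrow> 'd) \<Rightarrow> ('c \<Rightarrow> 'd)) \<Rightarrow> bool" where
  "free_left_module RS MS act \<longleftrightarrow>
     (\<exists>B. B \<subseteq> MS \<and>
        (\<forall>x \<in> MS. \<exists>!c. (\<forall>b. c b \<in> RS) \<and> (\<forall>b. b \<notin> B \<longrightarrow> c b = (\<lambda>_. 0)) \<and>
                        finite {b. c b \<noteq> (\<lambda>_. 0)} \<and>
                        x = (\<lambda>m. \<Sum>b \<in> {b. c b \<noteq> (\<lambda>_. 0)}. act (c b) b m)))"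

end

theory Submission
  imports Defs
begin

text \<open>Every trace factors uniquely as \<open>p q\<close> with \<open>p\<close> a trace over \<open>\<Sigma>0\<close> and \<open>q\<close> a trace none of
  whose possible first letters lies in \<open>\<Sigma>0\<close>. On words, \<open>p\<close> is obtained by greedily pulling to the
  front every letter of \<open>\<Sigma>0\<close> that commutes with all letters it has to pass; this extraction is
  invariant under commutation steps, which gives both existence and uniqueness. Hence \<open>M0\<close> embeds in
  \<open>M\<close>, and \<open>M\<close> is a free left \<open>M0\<close>-set whose basis \<open>T\<close> is the set of such \<open>q\<close>, so \<open>\<int>M\<close> is the
  free \<open>\<int>M0\<close>-module on the point masses at the elements of \<open>T\<close>.\<close>

section \<open>Trace equivalence\<close>

lemma swap_step_set_eq: "swap_step I u v \<Longrightarrow> set u = set v"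
  by (auto simp: swap_step_def)

lemma trace_eq_set_eq: "trace_eq I u v \<Longrightarrow> set u = set v"
  unfolding trace_eq_def by (induction rule: rtranclp_induct) (auto dest: swap_step_set_eq)

lemma trace_eq_refl [simp]: "trace_eq I u u"
  by (simp add: trace_eq_def)

lemma trace_eq_trans: "trace_eq I u v \<Longrightarrow> trace_eq I v w \<Longrightarrow> trace_eq I u w"
  unfolding trace_eq_def by (rule rtranclp_trans)

lemma swap_step_sym: "sym I \<Longrightarrow> swap_step I u v \<Longrightarrow> swap_step I v u"
  unfolding swap_step_def sym_def by blast

lemma trace_eq_sym:
  assumes "sym I" and "trace_eq I u v"
  shows "trace_eq I v u"
  using assms(2) unfolding trace_eq_def
  by (induction rule: rtranclp_induct)
    (auto intro: converse_rtranclp_into_rtranclp swap_step_sym[OF assms(1)])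

lemma swap_step_append_context: "swap_step I u v \<Longrightarrow> swap_step I (x @ u @ y) (x @ v @ y)"
  unfolding swap_step_def by (metis append.assoc)

lemma trace_eq_append_context: "trace_eq I u v \<Longrightarrow> trace_eq I (x @ u @ y) (x @ v @ y)"
  unfolding trace_eq_def
  by (induction rule: rtranclp_induct) (auto intro: rtranclp.rtrancl_into_rtrancl swap_step_append_context)

lemma trace_eq_append: "trace_eq I u u' \<Longrightarrow> trace_eq I v v' \<Longrightarrow> trace_eq I (u @ v) (u' @ v')"
  using trace_eq_append_context[of I u u' "[]" v] trace_eq_append_context[of I v v' u' "[]"]
  by (auto intro: trace_eq_trans)

lemma trace_eq_mono: "I0 \<subseteq> I \<Longrightarrow> trace_eq I0 u v \<Longrightarrow> trace_eq I u v"
  unfolding trace_eq_def swap_step_def by (erule rtranclp_mono[THEN predicate2D, rotated]) blast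

lemma trace_eq_swap: "(a, b) \<in> I \<Longrightarrow> trace_eq I [a, b] [b, a]"
  unfolding trace_eq_def swap_step_def by (rule r_into_rtranclp) force

lemma trace_eq_move_front: "\<forall>d \<in> set z. (d, c) \<in> I \<Longrightarrow> trace_eq I (z @ c # w) (c # z @ w)"
proof (induction z)
  case (Cons d z)
  have "trace_eq I (d # z @ c # w) (d # c # z @ w)"
    using trace_eq_append_context[OF Cons.IH, of "[d]" "[]"] Cons.prems by simp
  moreover have "trace_eq I (d # c # z @ w) (c # d # z @ w)"
    using trace_eq_append_context[OF trace_eq_swap, of d c I "[]" "z @ w"] Cons.prems by simp
  ultimately show ?case by (simp add: trace_eq_trans)
qed simp

lemma tclass_eq_iff: "sym I \<Longrightarrow> tclass I u = tclass I v \<longleftrightarrow> trace_eq I u v"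
  unfolding tclass_def using trace_eq_trans trace_eq_sym trace_eq_refl by blast

lemma trace_eq_rep_tclass: "trace_eq I u (rep (tclass I u))"
  unfolding rep_def tclass_def by (metis mem_Collect_eq someI trace_eq_refl)

lemma rep_in_lists: "m \<in> pcm A I \<Longrightarrow> rep m \<in> lists A"
  unfolding pcm_def using trace_eq_set_eq trace_eq_rep_tclass by (fastforce simp: in_lists_conv_set)

lemma tclass_rep: "sym I \<Longrightarrow> m \<in> pcm A I \<Longrightarrow> tclass I (rep m) = m"
  unfolding pcm_def using tclass_eq_iff trace_eq_rep_tclass trace_eq_sym by fastforce

lemma pcm_mult_tclass: "sym I \<Longrightarrow> pcm_mult I (tclass I u) (tclass I v) = tclass I (u @ v)"
  unfolding pcm_mult_def
  by (metis tclass_eq_iff trace_eq_append trace_eq_rep_tclass trace_eq_sym)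

lemma tclass_rep_tclass_mono:
  "sym I \<Longrightarrow> I0 \<subseteq> I \<Longrightarrow> tclass I (rep (tclass I0 u)) = tclass I u"
  by (metis tclass_eq_iff trace_eq_mono trace_eq_rep_tclass trace_eq_sym)

section \<open>Splitting off the prefix over a subalphabet\<close>

text \<open>\<open>S\<close> collects the letters already sent to the remainder; a letter joins the prefix only if it
  lies in \<open>A\<close> and commutes with all of them.\<close>

fun split_off :: "'a set \<Rightarrow> ('a \<times> 'a) set \<Rightarrow> 'a set \<Rightarrow> 'a list \<Rightarrow> 'a list \<times> 'a list" where
  "split_off A I S [] = ([], [])"
| "split_off A I S (c # w) =
     (if c \<in> A \<and> (\<forall>d \<in> S. (d, c) \<in> I)
      then (c # fst (split_off A I S w), snd (split_off A I S w))
      else (fst (split_off A I (insert c S) w), c # snd (split_off A I (insert c S) w)))"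

lemma split_off_set:
  "set (fst (split_off A I S w)) \<subseteq> A \<inter> set w \<and> set (snd (split_off A I S w)) \<subseteq> set w"
  by (induction w arbitrary: S) auto

lemma split_off_append:
  "split_off A I S (x @ y) =
     (let S' = S \<union> set (snd (split_off A I S x))
      in (fst (split_off A I S x) @ fst (split_off A I S' y), snd (split_off A I S x) @ snd (split_off A I S' y)))"
  by (induction x arbitrary: S) (auto simp: Let_def)

lemma split_off_lists_append:
  "set u \<subseteq> A \<Longrightarrow> split_off A I {} (u @ w) = (u @ fst (split_off A I {} w), snd (split_off A I {} w))"
  by (induction u) auto

lemma split_off_snd: "fst (split_off A I S (snd (split_off A I S w))) = []"
  by (induction w arbitrary: S) auto

lemma trace_eq_split_off:
  "set z \<subseteq> S \<Longrightarrow> trace_eq I (z @ w) (fst (split_off A I S w) @ z @ snd (split_off A I S w))"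
proof (induction w arbitrary: S z)
  case (Cons c w)
  show ?case
  proof (cases "c \<in> A \<and> (\<forall>d \<in> S. (d, c) \<in> I)")
    case True
    have "trace_eq I (z @ c # w) (c # z @ w)"
      using trace_eq_move_front[of z c I w] True Cons.prems by auto
    moreover have "trace_eq I (c # z @ w) (c # fst (split_off A I S w) @ z @ snd (split_off A I S w))"
      using trace_eq_append_context[OF Cons.IH[OF Cons.prems], of "[c]" "[]"] by simp
    ultimately show ?thesis using True by (auto intro: trace_eq_trans)
  next
    case False
    then show ?thesis using Cons.IH[of "z @ [c]" "insert c S"] Cons.prems by auto
  qed
qed simp

lemma split_off_swap:
  assumes "sym I" and "(a, b) \<in> I"
  shows "trace_eq ((A \<times> A) \<inter> I) (fst (split_off A I S [a, b])) (fst (split_off A I S [b, a]))"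
    and "trace_eq I (snd (split_off A I S [a, b])) (snd (split_off A I S [b, a]))"
    and "set (snd (split_off A I S [a, b])) = set (snd (split_off A I S [b, a]))"
  using assms
  by (cases "a \<in> A \<and> (\<forall>d \<in> S. (d, a) \<in> I)"; cases "b \<in> A \<and> (\<forall>d \<in> S. (d, b) \<in> I)";
      auto intro: trace_eq_swap dest: symD)+

lemma split_off_swap_step:
  assumes "sym I" and "swap_step I w v"
  shows "trace_eq ((A \<times> A) \<inter> I) (fst (split_off A I S w)) (fst (split_off A I S v))
    \<and> trace_eq I (snd (split_off A I S w)) (snd (split_off A I S v))"
proof -
  obtain x y a b where ab: "(a, b) \<in> I" and w: "w = x @ [a, b] @ y" and v: "v = x @ [b, a] @ y"
    using assms(2) unfolding swap_step_def by blast
  define S' where "S' = S \<union> set (snd (split_off A I S x))"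
  note swap = split_off_swap[OF assms(1) ab, of A S']
  show ?thesis
    unfolding w v split_off_append[of A I S x] split_off_append[of A I _ "[_, _]"] Let_def S'_def[symmetric]
    using swap(3) trace_eq_append_context[OF swap(1)] trace_eq_append_context[OF swap(2)]
    by (simp del: split_off.simps)
qed

lemma split_off_trace_eq:
  assumes "sym I" and "trace_eq I w v"
  shows "trace_eq ((A \<times> A) \<inter> I) (fst (split_off A I S w)) (fst (split_off A I S v))"
    and "trace_eq I (snd (split_off A I S w)) (snd (split_off A I S v))"
proof -
  have "(swap_step I)\<^sup>*\<^sup>* w v" using assms(2) unfolding trace_eq_def .
  then have "trace_eq ((A \<times> A) \<inter> I) (fst (split_off A I S w)) (fst (split_off A I S v))
    \<and> trace_eq I (snd (split_off A I S w)) (snd (split_off A I S v))"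
  proof (induction rule: rtranclp_induct)
    case (step y z)
    then show ?case using split_off_swap_step[OF assms(1) step(2), of A S] trace_eq_trans by blast
  qed simp
  then show "trace_eq ((A \<times> A) \<inter> I) (fst (split_off A I S w)) (fst (split_off A I S v))"
    and "trace_eq I (snd (split_off A I S w)) (snd (split_off A I S v))" by blast+
qed

lemma trace_eq_restrict:
  assumes "sym I" and "set u \<subseteq> A" and "set v \<subseteq> A" and "trace_eq I u v"
  shows "trace_eq ((A \<times> A) \<inter> I) u v"
  using split_off_trace_eq(1)[OF assms(1,4), of A "{}"]
    split_off_lists_append[OF assms(2), of I "[]"] split_off_lists_append[OF assms(3), of I "[]"]
  by simp

text \<open>The traces none of whose first letters lies in \<open>A\<close>.\<close>

definition pcm_reduced :: "'a set \<Rightarrow> 'a set \<Rightarrow> ('a \<times> 'a) set \<Rightarrow> 'a list set set" where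
  "pcm_reduced A \<Sigma> I = tclass I ` {q \<in> lists \<Sigma>. fst (split_off A I {} q) = []}"

lemma pcm_reduced_subset: "pcm_reduced A \<Sigma> I \<subseteq> pcm \<Sigma> I"
  unfolding pcm_reduced_def pcm_def by blast

lemma sym_restrict: "sym I \<Longrightarrow> sym ((A \<times> A) \<inter> I)"
  by (auto simp: sym_def)

lemma inj_on_tclass_rep:
  assumes "sym I"
  shows "inj_on (\<lambda>m0. tclass I (rep m0)) (pcm A ((A \<times> A) \<inter> I))"
proof (rule inj_onI)
  fix m0 m0' assume m0: "m0 \<in> pcm A ((A \<times> A) \<inter> I)" and m0': "m0' \<in> pcm A ((A \<times> A) \<inter> I)"
    and eq: "tclass I (rep m0) = tclass I (rep m0')"
  have "trace_eq I (rep m0) (rep m0')"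
    using eq by (simp add: tclass_eq_iff assms)
  then have "trace_eq ((A \<times> A) \<inter> I) (rep m0) (rep m0')"
    using trace_eq_restrict[OF assms] rep_in_lists[OF m0] rep_in_lists[OF m0'] by (simp add: lists_eq_set)
  then have "tclass ((A \<times> A) \<inter> I) (rep m0) = tclass ((A \<times> A) \<inter> I) (rep m0')"
    by (simp add: tclass_eq_iff sym_restrict[OF assms])
  then show "m0 = m0'"
    by (simp add: tclass_rep[OF sym_restrict[OF assms] m0] tclass_rep[OF sym_restrict[OF assms] m0'])
qed

lemma bij_betw_pcm_mult_reduced:
  assumes "sym I" and "A \<subseteq> \<Sigma>"
  shows "bij_betw (\<lambda>(m0, t). pcm_mult I (tclass I (rep m0)) t)
           (pcm A ((A \<times> A) \<inter> I) \<times> pcm_reduced A \<Sigma> I) (pcm \<Sigma> I)"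
proof -
  define I0 where "I0 = (A \<times> A) \<inter> I"
  define factor where
    "factor m = (tclass I0 (fst (split_off A I {} (rep m))), tclass I (snd (split_off A I {} (rep m))))" for m
  have factor_tclass:
    "factor (tclass I w) = (tclass I0 (fst (split_off A I {} w)), tclass I (snd (split_off A I {} w)))" for w
    using split_off_trace_eq[OF assms(1) trace_eq_sym[OF assms(1) trace_eq_rep_tclass], of A "{}"]
    by (simp add: factor_def I0_def tclass_eq_iff sym_restrict assms(1))
  have mult_tclass: "pcm_mult I (tclass I (rep (tclass I0 u))) (tclass I q) = tclass I (u @ q)" for u q
    by (simp add: tclass_rep_tclass_mono assms(1) I0_def pcm_mult_tclass)
  show ?thesis
    unfolding I0_def[symmetric]
  proof (rule bij_betw_byWitness[where f' = factor])
    show "\<forall>p \<in> pcm A I0 \<times> pcm_reduced A \<Sigma> I. factor ((\<lambda>(m0, t). pcm_mult I (tclass I (rep m0)) t) p) = p"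
    proof
      fix p assume "p \<in> pcm A I0 \<times> pcm_reduced A \<Sigma> I"
      then obtain u q where p: "p = (tclass I0 u, tclass I q)" and u: "u \<in> lists A"
        and q_reduced: "fst (split_off A I {} q) = []"
        unfolding pcm_def pcm_reduced_def by blast
      have "trace_eq I (snd (split_off A I {} q)) q"
        using trace_eq_sym[OF assms(1) trace_eq_split_off[of "[]" "{}" I q A]] q_reduced by simp
      moreover have "split_off A I {} (u @ q) = (u, snd (split_off A I {} q))"
        using u q_reduced by (simp add: split_off_lists_append lists_eq_set)
      ultimately show "factor ((\<lambda>(m0, t). pcm_mult I (tclass I (rep m0)) t) p) = p"
        by (simp add: p mult_tclass factor_tclass tclass_eq_iff assms(1))
    qed
    show "\<forall>m \<in> pcm \<Sigma> I. (\<lambda>(m0, t). pcm_mult I (tclass I (rep m0)) t) (factor m) = m"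
    proof
      fix m assume "m \<in> pcm \<Sigma> I"
      then obtain w where m: "m = tclass I w" unfolding pcm_def by blast
      show "(\<lambda>(m0, t). pcm_mult I (tclass I (rep m0)) t) (factor m) = m"
        using trace_eq_sym[OF assms(1) trace_eq_split_off[of "[]" "{}" I w A]]
        by (simp add: m factor_tclass mult_tclass tclass_eq_iff assms(1))
    qed
    show "(\<lambda>(m0, t). pcm_mult I (tclass I (rep m0)) t) ` (pcm A I0 \<times> pcm_reduced A \<Sigma> I) \<subseteq> pcm \<Sigma> I"
      using assms(2) by (fastforce simp: pcm_def pcm_reduced_def mult_tclass lists_eq_set)
    show "factor ` pcm \<Sigma> I \<subseteq> pcm A I0 \<times> pcm_reduced A \<Sigma> I"
      using split_off_set[of A I "{}"] split_off_snd[of A I "{}"]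
      by (fastforce simp: pcm_def pcm_reduced_def factor_tclass)
  qed
qed

section \<open>Free actions and free modules\<close>

definition mr_delta :: "'m \<Rightarrow> 'm \<Rightarrow> int" where
  "mr_delta t = (\<lambda>m. of_bool (m = t))"

lemma mr_delta_eq_iff [simp]: "mr_delta s = mr_delta t \<longleftrightarrow> s = t"
proof
  assume "mr_delta s = mr_delta t"
  then have "mr_delta s s = mr_delta t s" by simp
  then show "s = t" by (simp add: mr_delta_def)
qed simp

lemma inj_mr_delta: "inj mr_delta"
  by (simp add: inj_def)

lemma mr_delta_in_mring: "t \<in> pcm \<Sigma> I \<Longrightarrow> mr_delta t \<in> mring \<Sigma> I"
  by (simp add: mring_def mr_delta_def)

lemma mr_mult_delta_right:
  "mr_mult I f (mr_delta t) m = (\<Sum>m1 | f m1 \<noteq> 0 \<and> pcm_mult I m1 t = m. f m1)"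
proof -
  have "{(m1, m2). f m1 \<noteq> 0 \<and> mr_delta t m2 \<noteq> 0 \<and> pcm_mult I m1 m2 = m}
      = (\<lambda>m1. (m1, t)) ` {m1. f m1 \<noteq> 0 \<and> pcm_mult I m1 t = m}"
    by (auto simp: mr_delta_def)
  then show ?thesis
    unfolding mr_mult_def by (simp add: sum.reindex inj_on_def mr_delta_def)
qed

lemma mr_map_nonzero:
  assumes "mr_map I r m \<noteq> 0"
  shows "\<exists>m0. r m0 \<noteq> 0 \<and> m = tclass I (rep m0)"
proof (rule ccontr)
  assume "\<nexists>m0. r m0 \<noteq> 0 \<and> m = tclass I (rep m0)"
  then have "{m0. r m0 \<noteq> 0 \<and> tclass I (rep m0) = m} = {}" by auto
  then have "mr_map I r m = 0" unfolding mr_map_def by (simp only: sum.empty)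
  then show False using assms by simp
qed

lemma mr_map_tclass_rep:
  assumes "inj_on (\<lambda>m0. tclass I (rep m0)) (pcm \<Sigma>0 I0)" and "r \<in> mring \<Sigma>0 I0" and "m0 \<in> pcm \<Sigma>0 I0"
  shows "mr_map I r (tclass I (rep m0)) = r m0"
proof -
  have "{m0'. r m0' \<noteq> 0 \<and> tclass I (rep m0') = tclass I (rep m0)} = (if r m0 = 0 then {} else {m0})"
    using assms by (auto simp: mring_def inj_on_def)
  then show ?thesis
    unfolding mr_map_def by simp
qed

locale pcm_free_action =
  fixes \<Sigma>0 :: "'a set" and I0 :: "('a \<times> 'a) set" and \<Sigma> :: "'a set" and I :: "('a \<times> 'a) set"
    and T :: "'a list set set"
  assumes basis_subset: "T \<subseteq> pcm \<Sigma> I"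
    and inj_canon: "inj_on (\<lambda>m0. tclass I (rep m0)) (pcm \<Sigma>0 I0)"
    and bij_mult: "bij_betw (\<lambda>(m0, t). pcm_mult I (tclass I (rep m0)) t) (pcm \<Sigma>0 I0 \<times> T) (pcm \<Sigma> I)"
begin

abbreviation lmult :: "'a list set \<Rightarrow> 'a list set \<Rightarrow> 'a list set" where
  "lmult m0 t \<equiv> pcm_mult I (tclass I (rep m0)) t"

definition coord :: "'a list set \<Rightarrow> 'a list set \<times> 'a list set" where
  "coord = the_inv_into (pcm \<Sigma>0 I0 \<times> T) (case_prod lmult)"

lemma coord_in: "m \<in> pcm \<Sigma> I \<Longrightarrow> coord m \<in> pcm \<Sigma>0 I0 \<times> T"
  unfolding coord_def using bij_betw_the_inv_into[OF bij_mult] by (rule bij_betw_apply)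

lemma lmult_coord: "m \<in> pcm \<Sigma> I \<Longrightarrow> case_prod lmult (coord m) = m"
  unfolding coord_def by (rule f_the_inv_into_f_bij_betw[OF bij_mult])

lemma coord_lmult: "m0 \<in> pcm \<Sigma>0 I0 \<Longrightarrow> t \<in> T \<Longrightarrow> coord (lmult m0 t) = (m0, t)"
  unfolding coord_def using the_inv_into_f_f[OF bij_betw_imp_inj_on[OF bij_mult], of "(m0, t)"] by simp

lemma lmult_in: "m0 \<in> pcm \<Sigma>0 I0 \<Longrightarrow> t \<in> T \<Longrightarrow> lmult m0 t \<in> pcm \<Sigma> I"
  using bij_betw_apply[OF bij_mult, of "(m0, t)"] by simp

lemma sub_act_delta:
  assumes r: "r \<in> mring \<Sigma>0 I0" and t: "t \<in> T"
  shows "sub_act I r (mr_delta t) m = (if m \<in> pcm \<Sigma> I \<and> snd (coord m) = t then r (fst (coord m)) else 0)"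
proof -
  let ?S = "{m1. mr_map I r m1 \<noteq> 0 \<and> pcm_mult I m1 t = m}"
  have sub_act: "sub_act I r (mr_delta t) m = (\<Sum>m1 \<in> ?S. mr_map I r m1)"
    by (simp add: sub_act_def mr_mult_delta_right)
  have in_S: "\<exists>m0 \<in> pcm \<Sigma>0 I0. m1 = tclass I (rep m0) \<and> m \<in> pcm \<Sigma> I \<and> coord m = (m0, t)"
    if S: "m1 \<in> ?S" for m1
  proof -
    obtain m0 where "r m0 \<noteq> 0" and m1: "m1 = tclass I (rep m0)"
      using S mr_map_nonzero by blast
    then have m0: "m0 \<in> pcm \<Sigma>0 I0" using r by (auto simp: mring_def)
    have "lmult m0 t = m" using S m1 by simp
    then show ?thesis using m0 m1 lmult_in[OF m0 t] coord_lmult[OF m0 t] by blast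
  qed
  show ?thesis
  proof (cases "m \<in> pcm \<Sigma> I \<and> snd (coord m) = t")
    case True
    define m0 where "m0 = fst (coord m)"
    have m0: "m0 \<in> pcm \<Sigma>0 I0" and m: "lmult m0 t = m"
      using coord_in[of m] lmult_coord[of m] True by (auto simp: m0_def split: prod.splits)
    have "?S \<subseteq> {tclass I (rep m0)}"
      using in_S m0_def by fastforce
    then have "(\<Sum>m1 \<in> ?S. mr_map I r m1) = (\<Sum>m1 \<in> {tclass I (rep m0)}. mr_map I r m1)"
      by (intro sum.mono_neutral_left) (auto simp: m)
    then show ?thesis
      using True sub_act mr_map_tclass_rep[OF inj_canon r m0] by (simp add: m0_def)
  next
    case False
    then have "?S = {}" using in_S by fastforce
    then have "sub_act I r (mr_delta t) m = 0" unfolding sub_act by (simp only: sum.empty)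
    then show ?thesis using False by auto
  qed
qed

definition coefficients :: "(('a list set \<Rightarrow> int) \<Rightarrow> 'a list set \<Rightarrow> int) \<Rightarrow> bool" where
  "coefficients c \<longleftrightarrow> (\<forall>b. c b \<in> mring \<Sigma>0 I0) \<and> (\<forall>b. b \<notin> mr_delta ` T \<longrightarrow> c b = (\<lambda>_. 0))
     \<and> finite {b. c b \<noteq> (\<lambda>_. 0)}"

definition lincomb :: "(('a list set \<Rightarrow> int) \<Rightarrow> 'a list set \<Rightarrow> int) \<Rightarrow> 'a list set \<Rightarrow> int" where
  "lincomb c = (\<lambda>m. \<Sum>b \<in> {b. c b \<noteq> (\<lambda>_. 0)}. sub_act I (c b) b m)"

lemma lincomb_delta:
  assumes "coefficients c"
  shows "lincomb c m = (if m \<in> pcm \<Sigma> I then c (mr_delta (snd (coord m))) (fst (coord m)) else 0)"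
proof -
  let ?F = "{b. c b \<noteq> (\<lambda>_. 0)}"
  have summand: "sub_act I (c b) b m =
      (if m \<in> pcm \<Sigma> I \<and> b = mr_delta (snd (coord m)) then c b (fst (coord m)) else 0)"
    if b: "b \<in> ?F" for b
  proof -
    obtain t where "t \<in> T" and "b = mr_delta t"
      using b assms by (auto simp: coefficients_def)
    then show ?thesis
      using sub_act_delta[of "c b" t m] assms by (auto simp: coefficients_def)
  qed
  show ?thesis
  proof (cases "m \<in> pcm \<Sigma> I")
    case True
    have "(\<Sum>b \<in> ?F. sub_act I (c b) b m)
        = (\<Sum>b \<in> ?F. if b = mr_delta (snd (coord m)) then c b (fst (coord m)) else 0)"
      using summand True by (intro sum.cong) auto
    also have "\<dots> = c (mr_delta (snd (coord m))) (fst (coord m))"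
      using assms by (auto simp: coefficients_def sum.delta)
    finally show ?thesis using True by (simp add: lincomb_def)
  next
    case False
    then show ?thesis using summand by (simp add: lincomb_def sum.neutral)
  qed
qed

lemma lincomb_eq_iff:
  assumes c: "coefficients c" and x: "x \<in> mring \<Sigma> I"
  shows "x = lincomb c \<longleftrightarrow> (\<forall>m0 \<in> pcm \<Sigma>0 I0. \<forall>t \<in> T. c (mr_delta t) m0 = x (lmult m0 t))"
proof -
  have "x = lincomb c
      \<longleftrightarrow> (\<forall>m. x m = (if m \<in> pcm \<Sigma> I then c (mr_delta (snd (coord m))) (fst (coord m)) else 0))"
    by (simp add: fun_eq_iff lincomb_delta[OF c])
  also have "\<dots> \<longleftrightarrow> (\<forall>m \<in> pcm \<Sigma> I. x m = c (mr_delta (snd (coord m))) (fst (coord m)))"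
    using x by (auto simp: mring_def)
  also have "\<dots> \<longleftrightarrow> (\<forall>m0 \<in> pcm \<Sigma>0 I0. \<forall>t \<in> T. c (mr_delta t) m0 = x (lmult m0 t))"
  proof
    assume "\<forall>m \<in> pcm \<Sigma> I. x m = c (mr_delta (snd (coord m))) (fst (coord m))"
    then show "\<forall>m0 \<in> pcm \<Sigma>0 I0. \<forall>t \<in> T. c (mr_delta t) m0 = x (lmult m0 t)"
      by (simp add: lmult_in coord_lmult)
  next
    assume coeff: "\<forall>m0 \<in> pcm \<Sigma>0 I0. \<forall>t \<in> T. c (mr_delta t) m0 = x (lmult m0 t)"
    show "\<forall>m \<in> pcm \<Sigma> I. x m = c (mr_delta (snd (coord m))) (fst (coord m))"
    proof
      fix m assume m: "m \<in> pcm \<Sigma> I"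
      obtain m0 t where coord: "coord m = (m0, t)" by fastforce
      then have "m0 \<in> pcm \<Sigma>0 I0" and "t \<in> T" and "lmult m0 t = m"
        using coord_in[OF m] lmult_coord[OF m] by auto
      then show "x m = c (mr_delta (snd (coord m))) (fst (coord m))"
        using coeff coord by auto
    qed
  qed
  finally show ?thesis .
qed

definition coeffs_of :: "('a list set \<Rightarrow> int) \<Rightarrow> ('a list set \<Rightarrow> int) \<Rightarrow> 'a list set \<Rightarrow> int" where
  "coeffs_of x b = (\<lambda>m0. if m0 \<in> pcm \<Sigma>0 I0 \<and> b \<in> mr_delta ` T then x (lmult m0 (inv mr_delta b)) else 0)"

lemma coeffs_of_delta: "m0 \<in> pcm \<Sigma>0 I0 \<Longrightarrow> t \<in> T \<Longrightarrow> coeffs_of x (mr_delta t) m0 = x (lmult m0 t)"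
  by (simp add: coeffs_of_def inv_f_f[OF inj_mr_delta])

lemma coeffs_of_nonzero:
  "coeffs_of x b m0 \<noteq> 0 \<Longrightarrow> \<exists>t \<in> T. b = mr_delta t \<and> m0 \<in> pcm \<Sigma>0 I0 \<and> x (lmult m0 t) \<noteq> 0"
  by (auto simp: coeffs_of_def inv_f_f[OF inj_mr_delta] split: if_splits)

lemma coefficients_coeffs_of:
  assumes x: "x \<in> mring \<Sigma> I"
  shows "coefficients (coeffs_of x)"
  unfolding coefficients_def
proof (intro conjI allI impI)
  fix b
  have "{m0. coeffs_of x b m0 \<noteq> 0} \<subseteq> fst ` coord ` {m. x m \<noteq> 0} \<inter> pcm \<Sigma>0 I0"
  proof
    fix m0 assume "m0 \<in> {m0. coeffs_of x b m0 \<noteq> 0}"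
    then obtain t where "t \<in> T" and m0: "m0 \<in> pcm \<Sigma>0 I0" and "x (lmult m0 t) \<noteq> 0"
      using coeffs_of_nonzero by blast
    moreover have "m0 = fst (coord (lmult m0 t))"
      using m0 \<open>t \<in> T\<close> by (simp add: coord_lmult)
    ultimately show "m0 \<in> fst ` coord ` {m. x m \<noteq> 0} \<inter> pcm \<Sigma>0 I0"
      by blast
  qed
  then show "coeffs_of x b \<in> mring \<Sigma>0 I0"
    using x by (auto simp: mring_def intro: finite_subset)
next
  show "\<And>b. b \<notin> mr_delta ` T \<Longrightarrow> coeffs_of x b = (\<lambda>_. 0)"
    by (simp add: coeffs_of_def)
next
  have "{b. coeffs_of x b \<noteq> (\<lambda>_. 0)} \<subseteq> (\<lambda>m. mr_delta (snd (coord m))) ` {m. x m \<noteq> 0}"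
  proof
    fix b assume "b \<in> {b. coeffs_of x b \<noteq> (\<lambda>_. 0)}"
    then obtain m0 where "coeffs_of x b m0 \<noteq> 0" by auto
    then obtain t where "t \<in> T" and b: "b = mr_delta t" and m0: "m0 \<in> pcm \<Sigma>0 I0"
      and "x (lmult m0 t) \<noteq> 0"
      using coeffs_of_nonzero by blast
    moreover have "b = mr_delta (snd (coord (lmult m0 t)))"
      using m0 \<open>t \<in> T\<close> b by (simp add: coord_lmult)
    ultimately show "b \<in> (\<lambda>m. mr_delta (snd (coord m))) ` {m. x m \<noteq> 0}"
      by blast
  qed
  then show "finite {b. coeffs_of x b \<noteq> (\<lambda>_. 0)}"
    using x by (auto simp: mring_def intro: finite_subset)
qed

lemma coefficients_eqI:
  assumes "coefficients c" and "coefficients c'"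
    and "\<forall>m0 \<in> pcm \<Sigma>0 I0. \<forall>t \<in> T. c (mr_delta t) m0 = c' (mr_delta t) m0"
  shows "c = c'"
proof (intro ext)
  fix b m0
  show "c b m0 = c' b m0"
  proof (cases "m0 \<in> pcm \<Sigma>0 I0 \<and> b \<in> mr_delta ` T")
    case True
    then show ?thesis using assms(3) by auto
  next
    case False
    then have "c b m0 = 0" and "c' b m0 = 0"
      using assms(1,2) by (fastforce simp: coefficients_def mring_def)+
    then show ?thesis by simp
  qed
qed

theorem free_left_module_mring: "free_left_module (mring \<Sigma>0 I0) (mring \<Sigma> I) (sub_act I)"
  unfolding free_left_module_def lincomb_def[symmetric]
proof (intro exI[of _ "mr_delta ` T"] conjI ballI)
  show "mr_delta ` T \<subseteq> mring \<Sigma> I"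
    using basis_subset mr_delta_in_mring by blast
next
  fix x assume x: "x \<in> mring \<Sigma> I"
  have "coefficients c \<and> x = lincomb c \<longleftrightarrow> c = coeffs_of x" for c
    using coefficients_coeffs_of[OF x] lincomb_eq_iff[OF _ x] coefficients_eqI[of c "coeffs_of x"]
    by (auto simp: coeffs_of_delta)
  then show "\<exists>!c. (\<forall>b. c b \<in> mring \<Sigma>0 I0) \<and> (\<forall>b. b \<notin> mr_delta ` T \<longrightarrow> c b = (\<lambda>_. 0))
      \<and> finite {b. c b \<noteq> (\<lambda>_. 0)} \<and> x = lincomb c"
    unfolding coefficients_def by auto
qed

end

theorem lemma2p1:
  fixes \<Sigma> \<Sigma>0 :: "'a set" and I :: "('a \<times> 'a) set"
  assumes "finite \<Sigma>"
    and "I \<subseteq> \<Sigma> \<times> \<Sigma>"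
    and "sym I"
    and "irrefl I"
    and "\<Sigma>0 \<subseteq> \<Sigma>"
  shows "free_left_module (mring \<Sigma>0 ((\<Sigma>0 \<times> \<Sigma>0) \<inter> I)) (mring \<Sigma> I) (sub_act I)"
proof -
  interpret pcm_free_action \<Sigma>0 "(\<Sigma>0 \<times> \<Sigma>0) \<inter> I" \<Sigma> I "pcm_reduced \<Sigma>0 \<Sigma> I"
    using pcm_reduced_subset inj_on_tclass_rep[OF assms(3)] bij_betw_pcm_mult_reduced[OF assms(3,5)]
    by unfold_locales
  show ?thesis
    by (rule free_left_module_mring)
qed

end
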